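(* Let $n\ge1$, let $A\in\mathbb{C}^{2n\times 2n}$ be Hamiltonian, and let $f$ and $\operatorname{grad} f$ be as in the context. Then for every unitary symplectic $Z\in\mathbb{C}^{2n\times 2n}$ there exist a symplectic rotation $R(i,j,\phi,\alpha)$ of one of the three types (R1), (R2), (R3) (with admissible pivot pair $(i,j)$ for that type) and an angle $\alpha$ such that $$\big|\langle \operatorname{grad} f(Z),\, Z\dot R(i,j,0,\alpha)\rangle_{\mathbb{R}}\big|\ \ge\ \eta\,\|\operatorname{grad} f(Z)\|_F,\qquad \eta=\frac{2}{\sqrt{4n^2-2n}},$$ where $\dot R(i,j,0,\alpha)=\frac{\partial}{\partial\phi}R(i,j,\phi,\alpha)\big|_{\phi=0}$.
   Context: $J=J_{2n}=\begin{bmatrix}0&I_n\\-I_n&0\end{bmatrix}$; $A$ is Hamiltonian if $(JA)^H=JA$; $Z$ is symplectic if $Z^HJZ=J$. $f(Z)=\|\operatorname{diag}(Z^HAZ)\|_F^2=\sum_{j}|\langle AZe_j,Ze_j\rangle|^2$ on the manifold $\mathcal{M}$ of unitary symplectic matrices; $\langle X,Y\rangle_{\mathbb{R}}=\operatorname{Re}\operatorname{tr}(X^HY)$; $\operatorname{grad} f(Z)$ is the orthogonal projection of the Euclidean gradient $\big[\partial\tilde f/\partial\operatorname{Re}z_{jk}+\imath\,\partial\tilde f/\partial\operatorname{Im}z_{jk}\big]$ of $\tilde f(Z)=\sum_j|\langle AZe_j,Ze_j\rangle|^2$ onto $T_Z\mathcal{M}=\{ZK: K\text{ skew-Hermitian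 Hamiltonian}\}$. Write $c=\cos\phi$, $s=e^{\imath\alpha}\sin\phi$. All rotations equal $I_{2n}$ except in the listed entries: (R1) for $1\le i\le n$, $j=n+i$ (and $\alpha=0$): $R_{ii}=R_{n+i,n+i}=\cos\phi$, $R_{i,n+i}=-\sin\phi$, $R_{n+i,i}=\sin\phi$. (R2) for $1\le i<j\le n$: $R_{ii}=R_{jj}=R_{n+i,n+i}=R_{n+j,n+j}=c$, $R_{ij}=R_{n+i,n+j}=-s$, $R_{ji}=R_{n+j,n+i}=\bar s$. (R3) for $1\le i\le n$, $n+i<j\le 2n$ (so $i<j-n\le n$): $R_{ii}=R_{j-n,j-n}=R_{n+i,n+i}=R_{jj}=c$, $R_{ij}=-s$, $R_{j-n,n+i}=-\bar s$, $R_{n+i,j-n}=s$, $R_{ji}=\bar s$. Each such $R(i,j,\phi,\alpha)$ is unitary symplectic. *)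

theory Defs
  imports "HOL-Analysis.Analysis" "Jordan_Normal_Form.Matrix"
begin

text \<open>All matrices are complex 2n x 2n matrices (Jordan_Normal_Form mat, 0-based indices).
  Paper indices 1..2n are mapped to 0..2n-1 by subtracting 1.\<close>

definition ctrans :: "complex mat \<Rightarrow> complex mat" where
  "ctrans X = transpose_mat (map_mat cnj X)"

definition Jmat :: "nat \<Rightarrow> complex mat" where
  "Jmat n = mat (2*n) (2*n) (\<lambda>(r,c).
      if r < n \<and> c = r + n then 1 else if n \<le> r \<and> c = r - n then -1 else 0)"

definition hamiltonian :: "nat \<Rightarrow> complex mat \<Rightarrow> bool" where
  "hamiltonian n A \<longleftrightarrow> A \<in> carrier_mat (2*n) (2*n) \<and> ctrans (Jmat n * A) = Jmat n * A"

definition symplectic :: "nat \<Rightarrow> complex mat \<Rightarrow> bool" where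
  "symplectic n Z \<longleftrightarrow> Z \<in> carrier_mat (2*n) (2*n) \<and> ctrans Z * Jmat n * Z = Jmat n"

definition unitary :: "nat \<Rightarrow> complex mat \<Rightarrow> bool" where
  "unitary n Z \<longleftrightarrow> Z \<in> carrier_mat (2*n) (2*n) \<and> ctrans Z * Z = 1\<^sub>m (2*n)"

definition unitary_symplectic :: "nat \<Rightarrow> complex mat \<Rightarrow> bool" where
  "unitary_symplectic n Z \<longleftrightarrow> unitary n Z \<and> symplectic n Z"

definition rinner :: "complex mat \<Rightarrow> complex mat \<Rightarrow> real" where
  "rinner X Y = (\<Sum>k<dim_col (ctrans X * Y). Re ((ctrans X * Y) $$ (k,k)))"

definition fro_norm :: "complex mat \<Rightarrow> real" where
  "fro_norm X = sqrt (\<Sum>r<dim_row X. \<Sum>c<dim_col X. (cmod (X $$ (r,c)))\<^sup>2)"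

text \<open>The objective f~(Z) = sum_j |<A Z e_j, Z e_j>|^2 = sum_j |(Z^H A Z)_jj|^2, on all of C^{2n x 2n}.\<close>
definition ftil :: "nat \<Rightarrow> complex mat \<Rightarrow> complex mat \<Rightarrow> real" where
  "ftil n A Z = (\<Sum>j<2*n. (cmod ((ctrans Z * A * Z) $$ (j,j)))\<^sup>2)"

definition unit_mat :: "nat \<Rightarrow> nat \<Rightarrow> nat \<Rightarrow> complex mat" where
  "unit_mat n j k = mat (2*n) (2*n) (\<lambda>(r,c). if r = j \<and> c = k then 1 else 0)"

definition egrad :: "nat \<Rightarrow> complex mat \<Rightarrow> complex mat \<Rightarrow> complex mat" where
  "egrad n A Z = mat (2*n) (2*n) (\<lambda>(j,k).
      complex_of_real (deriv (\<lambda>t::real. ftil n A (Z + complex_of_real t \<cdot>\<^sub>m unit_mat n j k)) 0)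
      + \<i> * complex_of_real (deriv (\<lambda>t::real. ftil n A (Z + (\<i> * complex_of_real t) \<cdot>\<^sub>m unit_mat n j k)) 0))"

definition tangent :: "nat \<Rightarrow> complex mat \<Rightarrow> complex mat set" where
  "tangent n Z = {Z * K | K. K \<in> carrier_mat (2*n) (2*n) \<and> ctrans K = - K \<and> hamiltonian n K}"

definition grad_f :: "nat \<Rightarrow> complex mat \<Rightarrow> complex mat \<Rightarrow> complex mat" where
  "grad_f n A Z = (THE P. P \<in> tangent n Z \<and>
      (\<forall>X \<in> tangent n Z. rinner (egrad n A Z - P) X = 0))"

datatype rot_type = R1 | R2 | R3

text \<open>Admissible pivot pairs (paper's 1-based indices) for each rotation type.\<close>
definition admissible :: "nat \<Rightarrow> rot_type \<Rightarrow> nat \<Rightarrow> nat \<Rightarrow> real \<Rightarrow> bool" where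
  "admissible n t i j \<alpha> = (case t of
      R1 \<Rightarrow> 1 \<le> i \<and> i \<le> n \<and> j = n + i \<and> \<alpha> = 0
    | R2 \<Rightarrow> 1 \<le> i \<and> i < j \<and> j \<le> n
    | R3 \<Rightarrow> 1 \<le> i \<and> i \<le> n \<and> n + i < j \<and> j \<le> 2*n)"

definition rot_entry :: "nat \<Rightarrow> rot_type \<Rightarrow> nat \<Rightarrow> nat \<Rightarrow> real \<Rightarrow> real \<Rightarrow> nat \<Rightarrow> nat \<Rightarrow> complex" where
  "rot_entry n t i j \<phi> \<alpha> p q = (
     let c = complex_of_real (cos \<phi>);
         s = cis \<alpha> * complex_of_real (sin \<phi>)
     in case t of
       R1 \<Rightarrow> (if (p = i \<and> q = i) \<or> (p = n+i \<and> q = n+i) then complex_of_real (cos \<phi>)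
              else if p = i \<and> q = n+i then - complex_of_real (sin \<phi>)
              else if p = n+i \<and> q = i then complex_of_real (sin \<phi>)
              else if p = q then 1 else 0)
     | R2 \<Rightarrow> (if (p = i \<and> q = i) \<or> (p = j \<and> q = j) \<or> (p = n+i \<and> q = n+i) \<or> (p = n+j \<and> q = n+j) then c
              else if (p = i \<and> q = j) \<or> (p = n+i \<and> q = n+j) then - s
              else if (p = j \<and> q = i) \<or> (p = n+j \<and> q = n+i) then cnj s
              else if p = q then 1 else 0)
     | R3 \<Rightarrow> (if (p = i \<and> q = i) \<or> (p = j-n \<and> q = j-n) \<or> (p = n+i \<and> q = n+i) \<or> (p = j \<and> q = j) then c
              else if p = i \<and> q = j then - s
              else if p = j-n \<and> q = n+i then - cnj s
              else if p = n+i \<and> q = j-n then s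
              else if p = j \<and> q = i then cnj s
              else if p = q then 1 else 0))"

definition rot :: "nat \<Rightarrow> rot_type \<Rightarrow> nat \<Rightarrow> nat \<Rightarrow> real \<Rightarrow> real \<Rightarrow> complex mat" where
  "rot n t i j \<phi> \<alpha> = mat (2*n) (2*n) (\<lambda>(r,c). rot_entry n t i j \<phi> \<alpha> (r+1) (c+1))"

definition rot_dot :: "nat \<Rightarrow> rot_type \<Rightarrow> nat \<Rightarrow> nat \<Rightarrow> real \<Rightarrow> complex mat" where
  "rot_dot n t i j \<alpha> = mat (2*n) (2*n)
     (\<lambda>(r,c). vector_derivative (\<lambda>\<phi>. rot n t i j \<phi> \<alpha> $$ (r,c)) (at 0))"

definition eta :: "nat \<Rightarrow> real" where
  "eta n = 2 / sqrt (4 * (real n)\<^sup>2 - 2 * real n)"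

end

theory Submission
  imports Defs
begin

text \<open>
  In the frame of Z the Riemannian gradient is grad f(Z) = Z G, where G is the orthogonal
  projection of Z^H egrad(Z) onto the skew-Hermitian Hamiltonian matrices. The diagonal of
  Z^H egrad(Z) is real (its entries are 4 |(Z^H A Z)_jj|^2), so G has zero diagonal.
  Pairing G with the derivative at angle 0 of a rotation of type (R1), (R2) or (R3), with
  alpha the argument of the relevant entry, gives 2 |G(i,n+i)|, 4 |G(i,j)| and 4 |G(i,n+j)|,
  and by the two symmetries of G every off-diagonal entry has the modulus of one of these.
  If all the pairings were below eta |G|_F, summing the squared moduli of the entries row by
  row would give |G|_F^2 < n(n+1)/4 eta^2 |G|_F^2 <= |G|_F^2.
\<close>

section \<open>Conjugate transpose and the real inner product\<close>

lemma dim_ctrans [simp]: "dim_row (ctrans X) = dim_col X" "dim_col (ctrans X) = dim_row X"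
  by (auto simp: ctrans_def)

lemma ctrans_carrier_mat [simp, intro]: "X \<in> carrier_mat r c \<Longrightarrow> ctrans X \<in> carrier_mat c r"
  by (auto simp: ctrans_def)

lemma index_ctrans [simp]:
  "i < dim_col X \<Longrightarrow> j < dim_row X \<Longrightarrow> ctrans X $$ (i,j) = cnj (X $$ (j,i))"
  by (auto simp: ctrans_def)

lemma ctrans_ctrans [simp]: "ctrans (ctrans X) = X"
  by (intro eq_matI) auto

lemma ctrans_mult:
  assumes "X \<in> carrier_mat a b" "Y \<in> carrier_mat b c"
  shows "ctrans (X * Y) = ctrans Y * ctrans X"
  using assms by (intro eq_matI) (auto simp: scalar_prod_def cnj_sum mult.commute intro!: sum.cong)

lemma index_mult_mat_sum:
  assumes "X \<in> carrier_mat a b" "Y \<in> carrier_mat b c" "i < a" "j < c"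
  shows "(X * Y) $$ (i,j) = (\<Sum>k<b. X $$ (i,k) * Y $$ (k,j))"
  using assms by (simp add: scalar_prod_def atLeast0LessThan)

lemma diag_mult3_sum:
  assumes "X \<in> carrier_mat N N" "A \<in> carrier_mat N N" "Y \<in> carrier_mat N N" "j < N"
  shows "(X * A * Y) $$ (j,j) = (\<Sum>b<N. \<Sum>a<N. X $$ (j,a) * A $$ (a,b) * Y $$ (b,j))"
  using assms by (simp add: scalar_prod_def atLeast0LessThan sum_distrib_left mult.assoc) (rule sum.swap)

lemma rinner_eq_sum:
  assumes "X \<in> carrier_mat r c" "Y \<in> carrier_mat r c"
  shows "rinner X Y = (\<Sum>k<c. \<Sum>m<r. Re (cnj (X $$ (m,k)) * Y $$ (m,k)))"
  using assms unfolding rinner_def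
  by (auto simp: scalar_prod_def Re_sum atLeast0LessThan intro!: sum.cong)

lemma Re_cnj_mult_self: "Re (cnj z * z) = (cmod z)\<^sup>2"
  by (metis Re_complex_of_real complex_norm_square mult.commute)

lemma fro_norm_eq_sqrt_rinner:
  assumes "X \<in> carrier_mat r c"
  shows "fro_norm X = sqrt (rinner X X)"
  using assms unfolding fro_norm_def
  by (simp add: rinner_eq_sum[OF assms assms] Re_cnj_mult_self[symmetric] sum.swap[of _ "{..<r}"])

lemma rinner_self_eq_0_iff:
  assumes X: "X \<in> carrier_mat r c"
  shows "rinner X X = 0 \<longleftrightarrow> X = 0\<^sub>m r c"
proof
  assume "rinner X X = 0"
  then have "(\<Sum>k<c. \<Sum>m<r. (cmod (X $$ (m,k)))\<^sup>2) = 0"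
    unfolding rinner_eq_sum[OF X X] Re_cnj_mult_self .
  then have "\<forall>k<c. \<forall>m<r. (cmod (X $$ (m,k)))\<^sup>2 = 0"
    by (simp add: sum_nonneg_eq_0_iff sum_nonneg)
  then show "X = 0\<^sub>m r c"
    using X by (intro eq_matI) auto
qed (simp add: rinner_def)

lemma rinner_diff_left:
  assumes "X \<in> carrier_mat r c" "Y \<in> carrier_mat r c" "K \<in> carrier_mat r c"
  shows "rinner (X - Y) K = rinner X K - rinner Y K"
proof -
  have "X - Y \<in> carrier_mat r c" using assms by (metis minus_carrier_mat)
  then show ?thesis
    using assms by (simp add: rinner_eq_sum[of _ r c] sum_subtractf[symmetric] algebra_simps)
qed

lemma rinner_add_right:
  assumes "G \<in> carrier_mat r c" "X \<in> carrier_mat r c" "Y \<in> carrier_mat r c"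
  shows "rinner G (X + Y) = rinner G X + rinner G Y"
proof -
  have "X + Y \<in> carrier_mat r c" using assms by simp
  then show ?thesis
    using assms by (simp add: rinner_eq_sum[of _ r c] sum.distrib algebra_simps)
qed

lemma rinner_mult_right:
  assumes Z: "Z \<in> carrier_mat N N" and X: "X \<in> carrier_mat N c" and Y: "Y \<in> carrier_mat N c"
  shows "rinner X (Z * Y) = rinner (ctrans Z * X) Y"
proof -
  have "ctrans (ctrans Z * X) = ctrans X * Z"
    using Z X by (simp add: ctrans_mult[of _ N N _ c])
  then have "ctrans (ctrans Z * X) * Y = ctrans X * (Z * Y)"
    using Z X Y by (simp add: assoc_mult_mat[of _ c N _ N _ c])
  then show ?thesis unfolding rinner_def by simp
qed

lemma rinner_mult_unitary:
  assumes Z: "Z \<in> carrier_mat N N" and U: "ctrans Z * Z = 1\<^sub>m N"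
    and X: "X \<in> carrier_mat N c" and Y: "Y \<in> carrier_mat N c"
  shows "rinner (Z * X) (Z * Y) = rinner X Y"
proof -
  have "ctrans Z * (Z * X) = X"
    using Z X U by (simp add: assoc_mult_mat[symmetric, of _ N N _ N _ c])
  then show ?thesis
    using rinner_mult_right[OF Z, of "Z * X" c Y] Z X Y by simp
qed

lemma fro_norm_mult_unitary:
  assumes "Z \<in> carrier_mat N N" "ctrans Z * Z = 1\<^sub>m N" "X \<in> carrier_mat N c"
  shows "fro_norm (Z * X) = fro_norm X"
  using assms by (simp add: fro_norm_eq_sqrt_rinner[of _ N c] rinner_mult_unitary)

lemma unit_mat_carrier_mat [simp]: "unit_mat n a b \<in> carrier_mat (2*n) (2*n)"
  by (simp add: unit_mat_def)

lemma rinner_smult_unit_mat: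
  assumes G: "G \<in> carrier_mat (2*n) (2*n)" and a: "a < 2*n" and b: "b < 2*n"
  shows "rinner G (v \<cdot>\<^sub>m unit_mat n a b) = Re (cnj (G $$ (a,b)) * v)"
proof -
  have "rinner G (v \<cdot>\<^sub>m unit_mat n a b)
      = (\<Sum>k<2*n. \<Sum>m<2*n. if k = b \<and> m = a then Re (cnj (G $$ (a,b)) * v) else 0)"
    using G by (auto simp: rinner_eq_sum[of _ "2*n" "2*n"] unit_mat_def intro!: sum.cong)
  also have "\<dots> = (\<Sum>k<2*n. if k = b then Re (cnj (G $$ (a,b)) * v) else 0)"
    using a by (intro sum.cong refl) auto
  finally show ?thesis
    using b by simp
qed

section \<open>The Euclidean gradient\<close>

definition form_diag :: "nat \<Rightarrow> complex mat \<Rightarrow> complex mat \<Rightarrow> complex mat \<Rightarrow> nat \<Rightarrow> complex" where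
  "form_diag N U A V j = (\<Sum>b<N. \<Sum>a<N. cnj (U $$ (a,j)) * A $$ (a,b) * V $$ (b,j))"

lemma ftil_line:
  assumes Z: "Z \<in> carrier_mat (2*n) (2*n)" and U: "U \<in> carrier_mat (2*n) (2*n)"
    and A: "A \<in> carrier_mat (2*n) (2*n)"
  shows "ftil n A (Z + complex_of_real t \<cdot>\<^sub>m U) =
    (\<Sum>j<2*n. (cmod (form_diag (2*n) Z A Z j
       + of_real t * (form_diag (2*n) U A Z j + form_diag (2*n) Z A U j)
       + of_real t ^ 2 * form_diag (2*n) U A U j))\<^sup>2)"
proof -
  let ?X = "Z + complex_of_real t \<cdot>\<^sub>m U"
  have X: "?X \<in> carrier_mat (2*n) (2*n)" using Z U by auto
  have expand: "cnj (z1 + of_real t * u1) * a * (z2 + of_real t * u2)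
      = cnj z1 * a * z2 + of_real t * (cnj u1 * a * z2 + cnj z1 * a * u2)
        + of_real t ^ 2 * (cnj u1 * a * u2)" for z1 u1 a z2 u2
    by (simp add: algebra_simps power2_eq_square)
  have "(ctrans ?X * A * ?X) $$ (j,j) = form_diag (2*n) Z A Z j
      + of_real t * (form_diag (2*n) U A Z j + form_diag (2*n) Z A U j)
      + of_real t ^ 2 * form_diag (2*n) U A U j" if j: "j < 2*n" for j
  proof -
    have "(ctrans ?X * A * ?X) $$ (j,j) = (\<Sum>b<2*n. \<Sum>a<2*n.
        cnj (Z $$ (a,j) + of_real t * U $$ (a,j)) * A $$ (a,b) * (Z $$ (b,j) + of_real t * U $$ (b,j)))"
      using Z U j by (simp add: diag_mult3_sum[OF ctrans_carrier_mat[OF X] A X j])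
    then show ?thesis
      by (simp only: expand) (simp add: form_diag_def sum.distrib sum_distrib_left distrib_left)
  qed
  then show ?thesis unfolding ftil_def by simp
qed

lemma has_real_derivative_cmod_quadratic:
  "((\<lambda>t::real. (cmod (a + of_real t * b + of_real t ^ 2 * c))\<^sup>2) has_real_derivative 2 * Re (cnj a * b)) (at 0)"
proof -
  have components: "(\<lambda>t::real. (cmod (a + of_real t * b + of_real t ^ 2 * c))\<^sup>2)
      = (\<lambda>t. (Re a + t * Re b + t\<^sup>2 * Re c)\<^sup>2 + (Im a + t * Im b + t\<^sup>2 * Im c)\<^sup>2)"
    by (auto simp: cmod_power2 simp del: of_real_power simp add: of_real_power[symmetric])
  show ?thesis
    unfolding components by (rule derivative_eq_intros refl)+ (simp add: algebra_simps)
qed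

lemma if_1_0_mult [simp]:
  "(if P then 1 else 0) * (x::complex) = (if P then x else 0)"
  "x * (if P then 1 else 0) = (if P then x else 0)"
  "cnj (if P then 1 else 0) = (if P then 1 else 0)"
  by auto

lemma sum_if_const_cond: "(\<Sum>a\<in>S. if P then f a else 0) = (if P then (\<Sum>a\<in>S. f a) else 0)"
  by auto

lemma form_diag_smult_unit_mat:
  assumes "j < 2*n" "k < 2*n" "l < 2*n"
  shows "form_diag (2*n) (w \<cdot>\<^sub>m unit_mat n j k) A Z l =
      (if l = k then cnj w * (\<Sum>b<2*n. A $$ (j,b) * Z $$ (b,k)) else 0)"
    and "form_diag (2*n) Z A (w \<cdot>\<^sub>m unit_mat n j k) l =
      (if l = k then w * (\<Sum>a<2*n. cnj (Z $$ (a,k)) * A $$ (a,j)) else 0)"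
  using assms
  by (cases "l = k"; auto simp: form_diag_def unit_mat_def sum_distrib_left mult.assoc sum_if_const_cond
      if_distrib[of cnj] if_distrib[of "\<lambda>x. x * _"] if_distrib[of "\<lambda>x. _ * x"] cong: if_cong intro!: sum.cong)+

lemma deriv_ftil_smult_unit_mat:
  assumes Z: "Z \<in> carrier_mat (2*n) (2*n)" and A: "A \<in> carrier_mat (2*n) (2*n)"
    and j: "j < 2*n" and k: "k < 2*n"
  shows "deriv (\<lambda>t. ftil n A (Z + complex_of_real t \<cdot>\<^sub>m (w \<cdot>\<^sub>m unit_mat n j k))) 0 =
    2 * Re (cnj (form_diag (2*n) Z A Z k)
      * (cnj w * (\<Sum>b<2*n. A $$ (j,b) * Z $$ (b,k)) + w * (\<Sum>a<2*n. cnj (Z $$ (a,k)) * A $$ (a,j))))"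
proof -
  let ?U = "w \<cdot>\<^sub>m unit_mat n j k"
  let ?P = "\<Sum>b<2*n. A $$ (j,b) * Z $$ (b,k)" and ?Q = "\<Sum>a<2*n. cnj (Z $$ (a,k)) * A $$ (a,j)"
  have U: "?U \<in> carrier_mat (2*n) (2*n)" by (simp add: unit_mat_def)
  have sum_eq: "(\<Sum>l<2*n. 2 * Re (cnj (form_diag (2*n) Z A Z l)
        * (form_diag (2*n) ?U A Z l + form_diag (2*n) Z A ?U l)))
      = 2 * Re (cnj (form_diag (2*n) Z A Z k) * (cnj w * ?P + w * ?Q))"
  proof -
    have "(\<Sum>l<2*n. 2 * Re (cnj (form_diag (2*n) Z A Z l)
          * (form_diag (2*n) ?U A Z l + form_diag (2*n) Z A ?U l)))
        = (\<Sum>l<2*n. if l = k then 2 * Re (cnj (form_diag (2*n) Z A Z k) * (cnj w * ?P + w * ?Q)) else 0)"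
      by (intro sum.cong refl) (simp add: form_diag_smult_unit_mat[OF j k])
    then show ?thesis
      using k by simp
  qed
  have "((\<lambda>t. ftil n A (Z + complex_of_real t \<cdot>\<^sub>m ?U)) has_real_derivative
      (\<Sum>l<2*n. 2 * Re (cnj (form_diag (2*n) Z A Z l) * (form_diag (2*n) ?U A Z l + form_diag (2*n) Z A ?U l)))) (at 0)"
    unfolding ftil_line[OF Z U A]
    by (rule DERIV_sum, rule has_real_derivative_cmod_quadratic)
  then show ?thesis
    unfolding sum_eq by (rule DERIV_imp_deriv)
qed

lemma egrad_carrier_mat [simp]: "egrad n A Z \<in> carrier_mat (2*n) (2*n)"
  by (simp add: egrad_def)

lemma index_egrad:
  assumes Z: "Z \<in> carrier_mat (2*n) (2*n)" and A: "A \<in> carrier_mat (2*n) (2*n)"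
    and j: "j < 2*n" and k: "k < 2*n"
  shows "egrad n A Z $$ (j,k) = 2 * (cnj (form_diag (2*n) Z A Z k) * (\<Sum>b<2*n. A $$ (j,b) * Z $$ (b,k))
     + form_diag (2*n) Z A Z k * cnj (\<Sum>a<2*n. cnj (Z $$ (a,k)) * A $$ (a,j)))"
proof -
  have direction: "(\<lambda>t. ftil n A (Z + (c * complex_of_real t) \<cdot>\<^sub>m unit_mat n j k))
      = (\<lambda>t. ftil n A (Z + complex_of_real t \<cdot>\<^sub>m (c \<cdot>\<^sub>m unit_mat n j k)))" for c
    by (intro ext arg_cong[where f="ftil n A"] arg_cong[where f="\<lambda>X. Z + X"] eq_matI)
      (auto simp: unit_mat_def)
  have real_imag: "complex_of_real (2 * Re (cnj M * (cnj 1 * P + 1 * Q)))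
      + \<i> * complex_of_real (2 * Re (cnj M * (cnj \<i> * P + \<i> * Q))) = 2 * (cnj M * P + M * cnj Q)"
    for M P Q :: complex
    by (rule complex_eqI) (simp_all add: algebra_simps)
  have "egrad n A Z $$ (j,k) =
      complex_of_real (deriv (\<lambda>t. ftil n A (Z + (1 * complex_of_real t) \<cdot>\<^sub>m unit_mat n j k)) 0)
      + \<i> * complex_of_real (deriv (\<lambda>t. ftil n A (Z + (\<i> * complex_of_real t) \<cdot>\<^sub>m unit_mat n j k)) 0)"
    unfolding egrad_def using j k by simp
  also have "\<dots> = 2 * (cnj (form_diag (2*n) Z A Z k) * (\<Sum>b<2*n. A $$ (j,b) * Z $$ (b,k))
      + form_diag (2*n) Z A Z k * cnj (\<Sum>a<2*n. cnj (Z $$ (a,k)) * A $$ (a,j)))"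
    unfolding direction deriv_ftil_smult_unit_mat[OF Z A j k] by (rule real_imag)
  finally show ?thesis .
qed

text \<open>The diagonal entry equals \<open>4 |(Z\<^sup>H A Z)\<^sub>k\<^sub>k|\<^sup>2\<close>.\<close>

lemma Im_diag_ctrans_mult_egrad:
  assumes Z: "Z \<in> carrier_mat (2*n) (2*n)" and A: "A \<in> carrier_mat (2*n) (2*n)" and k: "k < 2*n"
  shows "Im ((ctrans Z * egrad n A Z) $$ (k,k)) = 0"
proof -
  define M where "M = form_diag (2*n) Z A Z k"
  define P where "P r = (\<Sum>b<2*n. A $$ (r,b) * Z $$ (b,k))" for r
  define Q where "Q r = (\<Sum>a<2*n. cnj (Z $$ (a,k)) * A $$ (a,r))" for r
  have "(ctrans Z * egrad n A Z) $$ (k,k) = (\<Sum>r<2*n. cnj (Z $$ (r,k)) * egrad n A Z $$ (r,k))"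
    using Z k by (simp add: index_mult_mat_sum[OF ctrans_carrier_mat[OF Z] egrad_carrier_mat k k])
  also have "\<dots> = (\<Sum>r<2*n. cnj (Z $$ (r,k)) * (2 * (cnj M * P r + M * cnj (Q r))))"
    by (intro sum.cong refl) (simp add: index_egrad[OF Z A _ k] M_def P_def Q_def)
  also have "\<dots> = 2 * (cnj M * (\<Sum>r<2*n. cnj (Z $$ (r,k)) * P r) + M * cnj (\<Sum>r<2*n. Z $$ (r,k) * Q r))"
    by (simp add: sum.distrib sum_distrib_left cnj_sum algebra_simps)
  also have "(\<Sum>r<2*n. cnj (Z $$ (r,k)) * P r) = M"
    unfolding M_def form_diag_def P_def by (simp add: sum_distrib_left mult.assoc, rule sum.swap)
  also have "(\<Sum>r<2*n. Z $$ (r,k) * Q r) = M"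
    unfolding M_def form_diag_def Q_def by (simp add: sum_distrib_left mult.commute mult.left_commute)
  finally show ?thesis by simp
qed

section \<open>Skew-Hermitian Hamiltonian matrices\<close>

text \<open>Row \<open>r\<close> of \<open>J\<close> has its only nonzero entry, \<open>jsign n r\<close>, in column \<open>jpartner n r\<close>.\<close>

definition jpartner :: "nat \<Rightarrow> nat \<Rightarrow> nat" where
  "jpartner n r = (if r < n then r + n else r - n)"

definition jsign :: "nat \<Rightarrow> nat \<Rightarrow> complex" where
  "jsign n r = (if r < n then 1 else -1)"

lemma jpartner_less [simp]: "r < 2*n \<Longrightarrow> jpartner n r < 2*n"
  by (auto simp: jpartner_def)

lemma jpartner_jpartner [simp]: "r < 2*n \<Longrightarrow> jpartner n (jpartner n r) = r"
  by (auto simp: jpartner_def)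

lemma jpartner_neq: "r < 2*n \<Longrightarrow> jpartner n r \<noteq> r"
  by (auto simp: jpartner_def)

lemma jsign_jpartner [simp]: "r < 2*n \<Longrightarrow> jsign n (jpartner n r) = - jsign n r"
  by (auto simp: jpartner_def jsign_def)

lemma sum_jpartner_reindex: "(\<Sum>m<2*n. g (jpartner n m)) = (\<Sum>m<2*n. g m)"
  by (rule sum.reindex_bij_witness[of _ "jpartner n" "jpartner n"]) auto

lemma Jmat_carrier_mat [simp]: "Jmat n \<in> carrier_mat (2*n) (2*n)"
  by (simp add: Jmat_def)

lemma dim_Jmat [simp]: "dim_row (Jmat n) = 2*n" "dim_col (Jmat n) = 2*n"
  by (simp_all add: Jmat_def)

lemma index_Jmat_mult:
  assumes "X \<in> carrier_mat (2*n) c" "r < 2*n" "k < c"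
  shows "(Jmat n * X) $$ (r,k) = jsign n r * X $$ (jpartner n r, k)"
proof -
  have "(Jmat n * X) $$ (r,k) = (\<Sum>a<2*n. Jmat n $$ (r,a) * X $$ (a,k))"
    by (rule index_mult_mat_sum[OF Jmat_carrier_mat assms])
  also have "\<dots> = (\<Sum>a<2*n. if a = jpartner n r then jsign n r * X $$ (a,k) else 0)"
    using assms by (intro sum.cong refl) (auto simp: Jmat_def jpartner_def jsign_def)
  finally show ?thesis
    using assms by simp
qed

definition skew_herm_hamiltonian :: "nat \<Rightarrow> complex mat \<Rightarrow> bool" where
  "skew_herm_hamiltonian n K \<longleftrightarrow> K \<in> carrier_mat (2*n) (2*n) \<and>
     (\<forall>r<2*n. \<forall>c<2*n. K $$ (c,r) = - cnj (K $$ (r,c)) \<and>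
        K $$ (jpartner n r, jpartner n c) = jsign n r * jsign n c * K $$ (r,c))"

lemma skew_herm_hamiltonianD:
  assumes "skew_herm_hamiltonian n K"
  shows "K \<in> carrier_mat (2*n) (2*n)"
    and "r < 2*n \<Longrightarrow> c < 2*n \<Longrightarrow> K $$ (c,r) = - cnj (K $$ (r,c))"
    and "r < 2*n \<Longrightarrow> c < 2*n \<Longrightarrow> K $$ (jpartner n r, jpartner n c) = jsign n r * jsign n c * K $$ (r,c)"
  using assms unfolding skew_herm_hamiltonian_def by blast+

lemma ctrans_eq_uminus_iff:
  assumes K: "K \<in> carrier_mat N N"
  shows "ctrans K = - K \<longleftrightarrow> (\<forall>r<N. \<forall>c<N. K $$ (c,r) = - cnj (K $$ (r,c)))"
proof
  assume h: "ctrans K = - K"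
  show "\<forall>r<N. \<forall>c<N. K $$ (c,r) = - cnj (K $$ (r,c))"
  proof (intro allI impI)
    fix r c assume "r < N" "c < N"
    then have "cnj (K $$ (c,r)) = - K $$ (r,c)"
      using arg_cong[OF h, of "\<lambda>M. M $$ (r,c)"] K by simp
    then show "K $$ (c,r) = - cnj (K $$ (r,c))"
      by (metis complex_cnj_cnj complex_cnj_minus)
  qed
next
  assume skew: "\<forall>r<N. \<forall>c<N. K $$ (c,r) = - cnj (K $$ (r,c))"
  show "ctrans K = - K"
  proof (rule eq_matI)
    fix i j assume "i < dim_row (- K)" "j < dim_col (- K)"
    then show "ctrans K $$ (i,j) = (- K) $$ (i,j)"
      using K skew[rule_format, of j i] by simp
  qed (use K in auto)
qed

lemma hamiltonian_iff_index:
  assumes K: "K \<in> carrier_mat (2*n) (2*n)"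
  shows "hamiltonian n K \<longleftrightarrow> (\<forall>r<2*n. \<forall>c<2*n.
     cnj (jsign n c * K $$ (jpartner n c, r)) = jsign n r * K $$ (jpartner n r, c))"
proof -
  have JK: "Jmat n * K \<in> carrier_mat (2*n) (2*n)"
    using mult_carrier_mat[OF Jmat_carrier_mat K] .
  have "ctrans (Jmat n * K) = Jmat n * K \<longleftrightarrow>
      (\<forall>r<2*n. \<forall>c<2*n. ctrans (Jmat n * K) $$ (r,c) = (Jmat n * K) $$ (r,c))"
    using JK by (auto intro!: eq_matI)
  then show ?thesis
    using K JK by (simp add: hamiltonian_def index_Jmat_mult[OF K] del: index_mult_mat)
qed

lemma skew_herm_hamiltonian_iff:
  assumes K: "K \<in> carrier_mat (2*n) (2*n)"
  shows "ctrans K = - K \<and> hamiltonian n K \<longleftrightarrow> skew_herm_hamiltonian n K"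
proof -
  have "(\<forall>c<2*n. cnj (jsign n c * K $$ (jpartner n c, r)) = jsign n r * K $$ (jpartner n r, c))
      \<longleftrightarrow> (\<forall>c<2*n. K $$ (jpartner n r, jpartner n c) = jsign n r * jsign n c * K $$ (r,c))"
    if skew: "\<forall>r<2*n. \<forall>c<2*n. K $$ (c,r) = - cnj (K $$ (r,c))" and r: "r < 2*n" for r
  proof -
    have "(\<forall>c<2*n. cnj (jsign n c * K $$ (jpartner n c, r)) = jsign n r * K $$ (jpartner n r, c))
      \<longleftrightarrow> (\<forall>c<2*n. cnj (jsign n (jpartner n c) * K $$ (jpartner n (jpartner n c), r))
          = jsign n r * K $$ (jpartner n r, jpartner n c))"
      by (metis jpartner_jpartner jpartner_less)
    also have "\<dots> \<longleftrightarrow> (\<forall>c<2*n. K $$ (jpartner n r, jpartner n c) = jsign n r * jsign n c * K $$ (r,c))"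
    proof -
      have "cnj (jsign n (jpartner n c) * K $$ (jpartner n (jpartner n c), r))
          = jsign n r * K $$ (jpartner n r, jpartner n c)
        \<longleftrightarrow> K $$ (jpartner n r, jpartner n c) = jsign n r * jsign n c * K $$ (r,c)" if c: "c < 2*n" for c
        using skew[rule_format, OF r c] r c by (cases "r < n"; cases "c < n") (auto simp: jsign_def jpartner_def)
      then show ?thesis
        by blast
    qed
    finally show ?thesis .
  qed
  then show ?thesis
    unfolding skew_herm_hamiltonian_def ctrans_eq_uminus_iff[OF K] hamiltonian_iff_index[OF K]
    using K by blast
qed

lemma tangent_eq: "tangent n Z = {Z * K | K. skew_herm_hamiltonian n K}"
proof -
  have "K \<in> carrier_mat (2*n) (2*n) \<and> ctrans K = - K \<and> hamiltonian n K \<longleftrightarrow> skew_herm_hamiltonian n K" for K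
    using skew_herm_hamiltonian_iff skew_herm_hamiltonianD(1) by blast
  then show ?thesis
    unfolding tangent_def by simp
qed

lemma skew_herm_hamiltonian_diff:
  assumes K1: "skew_herm_hamiltonian n K1" and K2: "skew_herm_hamiltonian n K2"
  shows "skew_herm_hamiltonian n (K1 - K2)"
  unfolding skew_herm_hamiltonian_def
proof (intro conjI allI impI)
  note K1c = skew_herm_hamiltonianD(1)[OF K1] and K2c = skew_herm_hamiltonianD(1)[OF K2]
  show "K1 - K2 \<in> carrier_mat (2*n) (2*n)"
    using K2c by (metis minus_carrier_mat)
  fix r c assume rc: "r < 2*n" "c < 2*n"
  show "(K1 - K2) $$ (c,r) = - cnj ((K1 - K2) $$ (r,c))"
    using K1c K2c rc skew_herm_hamiltonianD(2)[OF K1 rc] skew_herm_hamiltonianD(2)[OF K2 rc] by simp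
  show "(K1 - K2) $$ (jpartner n r, jpartner n c) = jsign n r * jsign n c * (K1 - K2) $$ (r,c)"
    using K1c K2c rc skew_herm_hamiltonianD(3)[OF K1 rc] skew_herm_hamiltonianD(3)[OF K2 rc]
    by (simp add: right_diff_distrib)
qed

section \<open>The Riemannian gradient\<close>

definition skew_part :: "complex mat \<Rightarrow> nat \<Rightarrow> nat \<Rightarrow> complex" where
  "skew_part W r c = (W $$ (r,c) - cnj (W $$ (c,r))) / 2"

text \<open>The skew-Hermitian part of \<open>W\<close>, averaged with its image under the involution
  \<open>K(r,c) \<mapsto> jsign r * jsign c * K(jpartner r, jpartner c)\<close>; among skew-Hermitian matrices its
  fixed points are exactly the Hamiltonian ones, so this is the orthogonal projection onto them.\<close>

definition skew_herm_ham_proj :: "nat \<Rightarrow> complex mat \<Rightarrow> complex mat" where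
  "skew_herm_ham_proj n W = mat (2*n) (2*n) (\<lambda>(r,c).
     (skew_part W r c + jsign n r * jsign n c * skew_part W (jpartner n r) (jpartner n c)) / 2)"

lemma skew_herm_ham_proj_carrier_mat [simp]: "skew_herm_ham_proj n W \<in> carrier_mat (2*n) (2*n)"
  by (simp add: skew_herm_ham_proj_def)

lemma index_skew_herm_ham_proj:
  "r < 2*n \<Longrightarrow> c < 2*n \<Longrightarrow> skew_herm_ham_proj n W $$ (r,c) =
     (skew_part W r c + jsign n r * jsign n c * skew_part W (jpartner n r) (jpartner n c)) / 2"
  by (simp add: skew_herm_ham_proj_def)

lemma skew_part_swap: "skew_part W c r = - cnj (skew_part W r c)"
  by (simp add: skew_part_def field_simps)

lemma skew_herm_hamiltonian_skew_herm_ham_proj: "skew_herm_hamiltonian n (skew_herm_ham_proj n W)"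
  unfolding skew_herm_hamiltonian_def
proof (intro conjI allI impI skew_herm_ham_proj_carrier_mat)
  fix r c assume r: "r < 2*n" and c: "c < 2*n"
  show "skew_herm_ham_proj n W $$ (c,r) = - cnj (skew_herm_ham_proj n W $$ (r,c))"
    using r c
    by (cases "r < n"; cases "c < n")
      (simp_all add: index_skew_herm_ham_proj skew_part_swap[of W c r]
        skew_part_swap[of W "jpartner n c" "jpartner n r"] jsign_def field_simps)
  show "skew_herm_ham_proj n W $$ (jpartner n r, jpartner n c) = jsign n r * jsign n c * skew_herm_ham_proj n W $$ (r,c)"
    using r c
    by (simp add: index_skew_herm_ham_proj) (cases "r < n"; cases "c < n"; simp add: jsign_def algebra_simps)
qed

lemma index_diag_skew_herm_ham_proj:
  assumes diag: "\<And>k. k < 2*n \<Longrightarrow> Im (W $$ (k,k)) = 0" and r: "r < 2*n"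
  shows "skew_herm_ham_proj n W $$ (r,r) = 0"
proof -
  have "skew_part W k k = 0" if "k < 2*n" for k
    using diag[OF that] by (simp add: skew_part_def complex_eq_iff)
  then show ?thesis
    using r by (simp add: index_skew_herm_ham_proj)
qed

definition rpairing :: "nat \<Rightarrow> (nat \<Rightarrow> nat \<Rightarrow> complex) \<Rightarrow> complex mat \<Rightarrow> real" where
  "rpairing N f K = (\<Sum>k<N. \<Sum>m<N. Re (cnj (f m k) * K $$ (m,k)))"

lemma rinner_eq_rpairing:
  "X \<in> carrier_mat N N \<Longrightarrow> K \<in> carrier_mat N N \<Longrightarrow> rinner X K = rpairing N (\<lambda>m k. X $$ (m,k)) K"
  by (simp add: rinner_eq_sum rpairing_def)

lemma rpairing_cong:
  "(\<And>m k. m < N \<Longrightarrow> k < N \<Longrightarrow> f m k = g m k) \<Longrightarrow> rpairing N f K = rpairing N g K"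
  unfolding rpairing_def by (intro sum.cong refl) auto

lemma rpairing_add: "rpairing N (\<lambda>m k. f m k + g m k) K = rpairing N f K + rpairing N g K"
  unfolding rpairing_def by (simp add: algebra_simps sum.distrib)

lemma rpairing_diff: "rpairing N (\<lambda>m k. f m k - g m k) K = rpairing N f K - rpairing N g K"
  unfolding rpairing_def by (simp add: algebra_simps sum_subtractf)

lemma rpairing_half: "rpairing N (\<lambda>m k. f m k / 2) K = rpairing N f K / 2"
  unfolding rpairing_def by (simp add: sum_divide_distrib)

lemma rpairing_cnj_transpose:
  assumes K: "skew_herm_hamiltonian n K"
  shows "rpairing (2*n) (\<lambda>m k. cnj (f k m)) K = - rpairing (2*n) f K"
proof -
  have "rpairing (2*n) (\<lambda>m k. cnj (f k m)) K = (\<Sum>k<2*n. \<Sum>m<2*n. Re (f k m * K $$ (m,k)))"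
    unfolding rpairing_def by simp
  also have "\<dots> = (\<Sum>k<2*n. \<Sum>m<2*n. Re (f m k * K $$ (k,m)))"
    by (rule sum.swap)
  also have "\<dots> = - rpairing (2*n) f K"
    unfolding rpairing_def sum_negf[symmetric]
  proof (intro sum.cong refl)
    fix k m assume "k \<in> {..<2*n}" "m \<in> {..<2*n}"
    then have "K $$ (k,m) = - cnj (K $$ (m,k))"
      using skew_herm_hamiltonianD(2)[OF K, of m k] by simp
    then show "Re (f m k * K $$ (k,m)) = - Re (cnj (f m k) * K $$ (m,k))"
      by simp
  qed
  finally show ?thesis .
qed

lemma rpairing_jpartner:
  assumes K: "skew_herm_hamiltonian n K"
  shows "rpairing (2*n) (\<lambda>m k. jsign n m * jsign n k * f (jpartner n m) (jpartner n k)) K = rpairing (2*n) f K"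
proof -
  define h where "h m k = Re (cnj (jsign n (jpartner n m) * jsign n (jpartner n k) * f m k)
      * K $$ (jpartner n m, jpartner n k))" for m k
  have "rpairing (2*n) (\<lambda>m k. jsign n m * jsign n k * f (jpartner n m) (jpartner n k)) K
      = (\<Sum>k<2*n. \<Sum>m<2*n. h (jpartner n m) (jpartner n k))"
    unfolding rpairing_def h_def by (intro sum.cong refl) simp
  also have "\<dots> = (\<Sum>k<2*n. \<Sum>m<2*n. h m k)"
    by (simp add: sum_jpartner_reindex[of "\<lambda>m. h m _"] sum_jpartner_reindex[of "\<lambda>k. \<Sum>m<2*n. h m k"])
  also have "\<dots> = rpairing (2*n) f K"
    unfolding rpairing_def
  proof (intro sum.cong refl)
    fix k m assume "k \<in> {..<2*n}" "m \<in> {..<2*n}"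
    then show "h m k = Re (cnj (f m k) * K $$ (m,k))"
      unfolding h_def using skew_herm_hamiltonianD(3)[OF K, of m k]
      by (cases "m < n"; cases "k < n") (auto simp: jsign_def jpartner_def)
  qed
  finally show ?thesis .
qed

lemma rinner_diff_skew_herm_ham_proj:
  assumes W: "W \<in> carrier_mat (2*n) (2*n)" and K: "skew_herm_hamiltonian n K"
  shows "rinner (W - skew_herm_ham_proj n W) K = 0"
proof -
  note Kc = skew_herm_hamiltonianD(1)[OF K]
  have "rinner (skew_herm_ham_proj n W) K
      = rpairing (2*n) (\<lambda>m k. (skew_part W m k
          + jsign n m * jsign n k * skew_part W (jpartner n m) (jpartner n k)) / 2) K"
    by (simp add: rinner_eq_rpairing[OF _ Kc] index_skew_herm_ham_proj cong: rpairing_cong)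
  also have "\<dots> = rpairing (2*n) (skew_part W) K"
    by (simp add: rpairing_add rpairing_half rpairing_jpartner[OF K])
  also have "\<dots> = rinner W K"
    unfolding skew_part_def rpairing_half rpairing_diff rpairing_cnj_transpose[OF K, of "\<lambda>m k. W $$ (m,k)"]
    by (simp add: rinner_eq_rpairing[OF W Kc])
  finally show ?thesis
    using W Kc by (simp add: rinner_diff_left)
qed

lemma rinner_diff_mult_skew_herm_ham_proj:
  assumes Z: "Z \<in> carrier_mat (2*n) (2*n)" and U: "ctrans Z * Z = 1\<^sub>m (2*n)"
    and E: "E \<in> carrier_mat (2*n) (2*n)" and K: "skew_herm_hamiltonian n K"
  shows "rinner (E - Z * skew_herm_ham_proj n (ctrans Z * E)) (Z * K) = 0"
proof -
  define G where "G = skew_herm_ham_proj n (ctrans Z * E)"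
  have G: "G \<in> carrier_mat (2*n) (2*n)"
    by (simp add: G_def)
  have EZG: "E - Z * G \<in> carrier_mat (2*n) (2*n)"
    using Z E G by (simp add: minus_carrier_mat)
  have "ctrans Z * (E - Z * G) = ctrans Z * E - ctrans Z * Z * G"
    using Z E G by (simp add: mult_minus_distrib_mat[of _ "2*n" "2*n"] assoc_mult_mat[of _ "2*n" "2*n"])
  also have "\<dots> = ctrans Z * E - G"
    using U G by simp
  finally have "rinner (E - Z * G) (Z * K) = rinner (ctrans Z * E - G) K"
    using rinner_mult_right[OF Z EZG skew_herm_hamiltonianD(1)[OF K]] by simp
  then show ?thesis
    using rinner_diff_skew_herm_ham_proj[OF mult_carrier_mat[OF ctrans_carrier_mat[OF Z] E] K]
    by (simp add: G_def)
qed

lemma tangent_orthogonal_residual_unique: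
  assumes Z: "Z \<in> carrier_mat (2*n) (2*n)" and U: "ctrans Z * Z = 1\<^sub>m (2*n)"
    and E: "E \<in> carrier_mat (2*n) (2*n)"
    and P: "P \<in> tangent n Z" "\<forall>X\<in>tangent n Z. rinner (E - P) X = 0"
    and Q: "Q \<in> tangent n Z" "\<forall>X\<in>tangent n Z. rinner (E - Q) X = 0"
  shows "P = Q"
proof -
  obtain K where K: "skew_herm_hamiltonian n K" and PK: "P = Z * K"
    using P(1) unfolding tangent_eq by blast
  obtain L where L: "skew_herm_hamiltonian n L" and QL: "Q = Z * L"
    using Q(1) unfolding tangent_eq by blast
  define D where "D = K - L"
  have D: "skew_herm_hamiltonian n D"
    unfolding D_def using skew_herm_hamiltonian_diff[OF K L] .
  note Dc = skew_herm_hamiltonianD(1)[OF D] and Kc = skew_herm_hamiltonianD(1)[OF K] and Lc = skew_herm_hamiltonianD(1)[OF L]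
  have Pc: "P \<in> carrier_mat (2*n) (2*n)" and Qc: "Q \<in> carrier_mat (2*n) (2*n)"
    and ZD: "Z * D \<in> carrier_mat (2*n) (2*n)"
    using Z Kc Lc Dc PK QL by simp_all
  have ZD_eq: "Z * D = P - Q"
    using Z Kc Lc PK QL by (simp add: D_def mult_minus_distrib_mat[of _ "2*n" "2*n"])
  have "Z * D \<in> tangent n Z"
    using D unfolding tangent_eq by blast
  then have "rinner (E - Q) (Z * D) - rinner (E - P) (Z * D) = 0"
    using P(2) Q(2) by simp
  then have "rinner (Z * D) (Z * D) = 0"
    using rinner_diff_left[OF E Qc ZD] rinner_diff_left[OF E Pc ZD] rinner_diff_left[OF Pc Qc ZD] ZD_eq
    by simp
  then have D0: "D = 0\<^sub>m (2*n) (2*n)"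
    using rinner_self_eq_0_iff[OF Dc] rinner_mult_unitary[OF Z U Dc Dc] by simp
  have "K = L"
  proof (intro eq_matI)
    fix i j assume ij: "i < dim_row L" "j < dim_col L"
    then have "(K - L) $$ (i,j) = 0"
      using D0 Lc by (simp add: D_def)
    then show "K $$ (i,j) = L $$ (i,j)"
      using Kc Lc ij by simp
  qed (use Kc Lc in auto)
  then show ?thesis
    using PK QL by simp
qed

lemma grad_f_eq:
  assumes "unitary_symplectic n Z"
  shows "grad_f n A Z = Z * skew_herm_ham_proj n (ctrans Z * egrad n A Z)"
proof -
  have Z: "Z \<in> carrier_mat (2*n) (2*n)" and U: "ctrans Z * Z = 1\<^sub>m (2*n)"
    using assms unfolding unitary_symplectic_def unitary_def by auto
  let ?P = "Z * skew_herm_ham_proj n (ctrans Z * egrad n A Z)"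
  have tan: "?P \<in> tangent n Z"
    unfolding tangent_eq using skew_herm_hamiltonian_skew_herm_ham_proj by blast
  have orth: "\<forall>X\<in>tangent n Z. rinner (egrad n A Z - ?P) X = 0"
    unfolding tangent_eq using rinner_diff_mult_skew_herm_ham_proj[OF Z U egrad_carrier_mat] by auto
  show ?thesis
    unfolding grad_f_def
  proof (rule the_equality)
    show "?P \<in> tangent n Z \<and> (\<forall>X\<in>tangent n Z. rinner (egrad n A Z - ?P) X = 0)"
      using tan orth by blast
    fix P assume "P \<in> tangent n Z \<and> (\<forall>X\<in>tangent n Z. rinner (egrad n A Z - P) X = 0)"
    then show "P = ?P"
      using tangent_orthogonal_residual_unique[OF Z U egrad_carrier_mat _ _ tan orth] by blast
  qed
qed

section \<open>Derivatives of the rotations\<close>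

lemma has_vector_derivative_If_const_cond:
  "(P \<Longrightarrow> (f has_vector_derivative f') F) \<Longrightarrow> (\<not> P \<Longrightarrow> (g has_vector_derivative g') F) \<Longrightarrow>
   ((\<lambda>x. if P then f x else g x) has_vector_derivative (if P then f' else g')) F"
  by (cases P) auto

lemma has_vector_derivative_rot_entries:
  "((\<lambda>\<phi>. complex_of_real (cos \<phi>)) has_vector_derivative 0) (at 0)"
  "((\<lambda>\<phi>. - complex_of_real (sin \<phi>)) has_vector_derivative -1) (at 0)"
  "((\<lambda>\<phi>. complex_of_real (sin \<phi>)) has_vector_derivative 1) (at 0)"
  "((\<lambda>\<phi>. - (a * complex_of_real (sin \<phi>))) has_vector_derivative - a) (at 0)"
  "((\<lambda>\<phi>. cnj (a * complex_of_real (sin \<phi>))) has_vector_derivative cnj a) (at 0)"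
  "((\<lambda>\<phi>. a * complex_of_real (sin \<phi>)) has_vector_derivative a) (at 0)"
  "((\<lambda>\<phi>. - cnj (a * complex_of_real (sin \<phi>))) has_vector_derivative - cnj a) (at 0)"
  "((\<lambda>\<phi>. b) has_vector_derivative 0) (at 0)"
proof -
  show sin: "((\<lambda>\<phi>. complex_of_real (sin \<phi>)) has_vector_derivative 1) (at 0)"
    using has_vector_derivative_of_real[OF DERIV_sin[of 0]] by simp
  show asin: "((\<lambda>\<phi>. a * complex_of_real (sin \<phi>)) has_vector_derivative a) (at 0)"
    using has_vector_derivative_mult_right[OF sin, of a] by simp
  show "((\<lambda>\<phi>. complex_of_real (cos \<phi>)) has_vector_derivative 0) (at 0)"
    using has_vector_derivative_of_real[OF DERIV_cos[of 0]] by simp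
  show "((\<lambda>\<phi>. - complex_of_real (sin \<phi>)) has_vector_derivative -1) (at 0)"
    using has_vector_derivative_minus[OF sin] by simp
  show "((\<lambda>\<phi>. - (a * complex_of_real (sin \<phi>))) has_vector_derivative - a) (at 0)"
    using has_vector_derivative_minus[OF asin] .
  show "((\<lambda>\<phi>. cnj (a * complex_of_real (sin \<phi>))) has_vector_derivative cnj a) (at 0)"
    using has_vector_derivative_cnj[OF asin] .
  show "((\<lambda>\<phi>. - cnj (a * complex_of_real (sin \<phi>))) has_vector_derivative - cnj a) (at 0)"
    using has_vector_derivative_minus[OF has_vector_derivative_cnj[OF asin]] .
  show "((\<lambda>\<phi>. b) has_vector_derivative 0) (at 0)"
    by (rule has_vector_derivative_const)
qed

lemma index_rot_dot:
  "r < 2*n \<Longrightarrow> c < 2*n \<Longrightarrow>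
   rot_dot n t i j \<alpha> $$ (r,c) = vector_derivative (\<lambda>\<phi>. rot_entry n t i j \<phi> \<alpha> (r+1) (c+1)) (at 0)"
  by (simp add: rot_dot_def rot_def)

lemma rot_dot_carrier_mat [simp]: "rot_dot n t i j \<alpha> \<in> carrier_mat (2*n) (2*n)"
  by (simp add: rot_dot_def)

lemma dim_rot_dot [simp]: "dim_row (rot_dot n t i j \<alpha>) = 2*n" "dim_col (rot_dot n t i j \<alpha>) = 2*n"
  by (simp_all add: rot_dot_def)

text \<open>The redundant branches (\<open>if p = q then 0 else 0\<close>) mirror \<open>rot_entry_def\<close>, so that the
  derivative rules apply branch by branch.\<close>

lemma rot_entry_deriv:
  "vector_derivative (\<lambda>\<phi>. rot_entry n R1 i j \<phi> \<alpha> p q) (at 0) =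
     (if (p = i \<and> q = i) \<or> (p = n+i \<and> q = n+i) then 0
      else if p = i \<and> q = n+i then - 1
      else if p = n+i \<and> q = i then 1
      else if p = q then 0 else 0)"
  "vector_derivative (\<lambda>\<phi>. rot_entry n R2 i j \<phi> \<alpha> p q) (at 0) =
     (if (p = i \<and> q = i) \<or> (p = j \<and> q = j) \<or> (p = n+i \<and> q = n+i) \<or> (p = n+j \<and> q = n+j) then 0
      else if (p = i \<and> q = j) \<or> (p = n+i \<and> q = n+j) then - cis \<alpha>
      else if (p = j \<and> q = i) \<or> (p = n+j \<and> q = n+i) then cnj (cis \<alpha>)
      else if p = q then 0 else 0)"
  "vector_derivative (\<lambda>\<phi>. rot_entry n R3 i j \<phi> \<alpha> p q) (at 0) =
     (if (p = i \<and> q = i) \<or> (p = j-n \<and> q = j-n) \<or> (p = n+i \<and> q = n+i) \<or> (p = j \<and> q = j) then 0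
      else if p = i \<and> q = j then - cis \<alpha>
      else if p = j-n \<and> q = n+i then - cnj (cis \<alpha>)
      else if p = n+i \<and> q = j-n then cis \<alpha>
      else if p = j \<and> q = i then cnj (cis \<alpha>)
      else if p = q then 0 else 0)"
  unfolding rot_entry_def Let_def rot_type.case
  by (rule vector_derivative_at, intro has_vector_derivative_If_const_cond has_vector_derivative_rot_entries)+

text \<open>Pivot indices of the rotations are 1-based, as in the paper; matrix indices are 0-based.\<close>

lemma rot_dot_R1:
  assumes "i < n"
  shows "rot_dot n R1 (i+1) (n+(i+1)) 0 = (-1) \<cdot>\<^sub>m unit_mat n i (n+i) + 1 \<cdot>\<^sub>m unit_mat n (n+i) i"
  by (rule eq_matI) (use assms in \<open>auto simp: index_rot_dot rot_entry_deriv unit_mat_def\<close>)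

lemma rot_dot_R2:
  assumes "i < j" "j < n"
  shows "rot_dot n R2 (i+1) (j+1) \<alpha> =
    (- cis \<alpha>) \<cdot>\<^sub>m unit_mat n i j + (- cis \<alpha>) \<cdot>\<^sub>m unit_mat n (n+i) (n+j)
    + cnj (cis \<alpha>) \<cdot>\<^sub>m unit_mat n j i + cnj (cis \<alpha>) \<cdot>\<^sub>m unit_mat n (n+j) (n+i)"
  by (rule eq_matI) (use assms in \<open>auto simp: index_rot_dot rot_entry_deriv unit_mat_def\<close>)

lemma rot_dot_R3:
  assumes "i < j" "j < n"
  shows "rot_dot n R3 (i+1) (n+(j+1)) \<alpha> =
    (- cis \<alpha>) \<cdot>\<^sub>m unit_mat n i (n+j) + (- cnj (cis \<alpha>)) \<cdot>\<^sub>m unit_mat n j (n+i)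
    + cis \<alpha> \<cdot>\<^sub>m unit_mat n (n+i) j + cnj (cis \<alpha>) \<cdot>\<^sub>m unit_mat n (n+j) i"
  by (rule eq_matI) (use assms in \<open>auto simp: index_rot_dot rot_entry_deriv unit_mat_def\<close>)

lemma Re_cnj_mult_cis_Arg: "Re (cnj z * cis (Arg z)) = cmod z"
proof -
  have "cnj z * cis (Arg z) = complex_of_real (cmod z) * (cnj (cis (Arg z)) * cis (Arg z))"
    by (subst (1) rcis_cmod_Arg[symmetric]) (simp add: rcis_def)
  also have "cnj (cis (Arg z)) * cis (Arg z) = 1"
    by (simp add: cis_cnj cis_mult)
  finally show ?thesis by simp
qed

lemma rinner_rot_dot_R1:
  assumes G: "skew_herm_hamiltonian n G" and i: "i < n"
  shows "\<bar>rinner G (rot_dot n R1 (i+1) (n+(i+1)) 0)\<bar> = 2 * cmod (G $$ (i,n+i))"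
proof -
  let ?g = "G $$ (i,n+i)"
  have skew: "G $$ (n+i,i) = - cnj ?g"
    using skew_herm_hamiltonianD(2)[OF G, of i "n+i"] i by simp
  have jsym: "G $$ (n+i,i) = - ?g"
    using skew_herm_hamiltonianD(3)[OF G, of i "n+i"] i by (simp add: jpartner_def jsign_def add.commute)
  have "Im ?g = 0"
    using skew jsym by (simp add: complex_eq_iff)
  moreover have "rinner G (rot_dot n R1 (i+1) (n+(i+1)) 0) = - 2 * Re ?g"
    unfolding rot_dot_R1[OF i] using i skew_herm_hamiltonianD(1)[OF G]
    by (simp add: rinner_add_right rinner_smult_unit_mat skew)
  ultimately show ?thesis
    by (simp add: cmod_def)
qed

lemma rinner_rot_dot_R2:
  assumes G: "skew_herm_hamiltonian n G" and ij: "i < j" "j < n"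
  shows "\<bar>rinner G (rot_dot n R2 (i+1) (j+1) (Arg (G $$ (i,j))))\<bar> = 4 * cmod (G $$ (i,j))"
proof -
  let ?g = "G $$ (i,j)"
  have "G $$ (j,i) = - cnj ?g"
    using skew_herm_hamiltonianD(2)[OF G, of i j] ij by simp
  moreover have "G $$ (n+i,n+j) = ?g"
    using skew_herm_hamiltonianD(3)[OF G, of i j] ij by (simp add: jpartner_def jsign_def add.commute)
  moreover have "G $$ (n+j,n+i) = G $$ (j,i)"
    using skew_herm_hamiltonianD(3)[OF G, of j i] ij by (simp add: jpartner_def jsign_def add.commute)
  ultimately have "rinner G (rot_dot n R2 (i+1) (j+1) (Arg ?g)) = - 4 * Re (cnj ?g * cis (Arg ?g))"
    unfolding rot_dot_R2[OF ij] using ij skew_herm_hamiltonianD(1)[OF G]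
    by (simp add: rinner_add_right rinner_smult_unit_mat)
  then show ?thesis
    unfolding Re_cnj_mult_cis_Arg by simp
qed

lemma rinner_rot_dot_R3:
  assumes G: "skew_herm_hamiltonian n G" and ij: "i < j" "j < n"
  shows "\<bar>rinner G (rot_dot n R3 (i+1) (n+(j+1)) (Arg (G $$ (i,n+j))))\<bar> = 4 * cmod (G $$ (i,n+j))"
proof -
  let ?g = "G $$ (i,n+j)"
  have skew: "G $$ (n+j,i) = - cnj ?g"
    using skew_herm_hamiltonianD(2)[OF G, of i "n+j"] ij by simp
  moreover have "G $$ (j,n+i) = cnj ?g"
    using skew_herm_hamiltonianD(3)[OF G, of "n+j" i] ij skew by (simp add: jpartner_def jsign_def add.commute)
  moreover have "G $$ (n+i,j) = - ?g"
    using skew_herm_hamiltonianD(3)[OF G, of i "n+j"] ij by (simp add: jpartner_def jsign_def add.commute)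
  ultimately have "rinner G (rot_dot n R3 (i+1) (n+(j+1)) (Arg ?g)) = - 4 * Re (cnj ?g * cis (Arg ?g))"
    unfolding rot_dot_R3[OF ij] using ij skew_herm_hamiltonianD(1)[OF G]
    by (simp add: rinner_add_right rinner_smult_unit_mat)
  then show ?thesis
    unfolding Re_cnj_mult_cis_Arg by simp
qed

section \<open>Counting the entries\<close>

lemma sum_power2_less_two_level_bound:
  fixes x :: "nat \<Rightarrow> real"
  assumes nonneg: "\<And>c. 0 \<le> x c" and r: "r < N" and p: "p < N" "p \<noteq> r" and zero: "x r = 0"
    and peak: "2 * x p < T" and rest: "\<And>c. c < N \<Longrightarrow> c \<noteq> r \<Longrightarrow> c \<noteq> p \<Longrightarrow> 4 * x c < T"
  shows "(\<Sum>c<N. (x c)\<^sup>2) < real (N + 2) * (T/4)\<^sup>2"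
proof -
  define a where "a = (T/4)\<^sup>2"
  define bnd where "bnd c = (if c = r then 0 else if c = p then 4 * a else a)" for c
  have sq_less: "u\<^sup>2 < v\<^sup>2" if "0 \<le> u" "u < v" for u v :: real
    using that by (simp add: power_strict_mono)
  have peak_sq: "(x p)\<^sup>2 < bnd p"
    using sq_less[OF nonneg, of p "T/2"] peak p by (simp add: bnd_def a_def power_divide)
  have "(x c)\<^sup>2 \<le> bnd c" if "c < N" for c
    using sq_less[OF nonneg, of c "T/4"] rest[OF that] peak_sq zero
    by (cases "c = r"; cases "c = p") (auto simp: bnd_def a_def)
  then have "(\<Sum>c<N. (x c)\<^sup>2) < (\<Sum>c<N. bnd c)"
    using peak_sq p by (intro sum_strict_mono_ex1) auto
  also have "(\<Sum>c<N. bnd c) = (\<Sum>c<N. a - (if c = r then a else 0) + (if c = p then 3 * a else 0))"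
    using p by (intro sum.cong refl) (auto simp: bnd_def)
  also have "\<dots> = real (N + 2) * a"
    using r p by (simp add: sum.distrib sum_subtractf algebra_simps)
  finally show ?thesis
    unfolding a_def .
qed

lemma skew_herm_hamiltonian_cmod_swap:
  "skew_herm_hamiltonian n G \<Longrightarrow> r < 2*n \<Longrightarrow> c < 2*n \<Longrightarrow> cmod (G $$ (c,r)) = cmod (G $$ (r,c))"
  using skew_herm_hamiltonianD(2)[of n G r c] by simp

lemma skew_herm_hamiltonian_cmod_jpartner:
  "skew_herm_hamiltonian n G \<Longrightarrow> r < 2*n \<Longrightarrow> c < 2*n \<Longrightarrow>
   cmod (G $$ (jpartner n r, jpartner n c)) = cmod (G $$ (r,c))"
  using skew_herm_hamiltonianD(3)[of n G r c] by (simp add: norm_mult jsign_def)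

lemma skew_herm_hamiltonian_jpartner_entry_bound:
  assumes G: "skew_herm_hamiltonian n G" and r: "r < 2*n"
    and R1: "\<And>i. i < n \<Longrightarrow> 2 * cmod (G $$ (i,n+i)) < T"
  shows "2 * cmod (G $$ (r, jpartner n r)) < T"
proof (cases "r < n")
  case True
  then show ?thesis
    using R1[OF True] by (simp add: jpartner_def add.commute)
next
  case False
  then have "n + (r - n) = r" "r - n < n"
    using r by auto
  then show ?thesis
    using R1[of "r - n"] skew_herm_hamiltonian_cmod_swap[OF G, of "r - n" r] r False by (simp add: jpartner_def)
qed

lemma skew_herm_hamiltonian_upper_offdiag_entry_bound:
  assumes G: "skew_herm_hamiltonian n G" and r: "r < n" and c: "c < 2*n"
    and rc: "c \<noteq> r" "c \<noteq> n + r"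
    and R2: "\<And>i j. i < j \<Longrightarrow> j < n \<Longrightarrow> 4 * cmod (G $$ (i,j)) < T"
    and R3: "\<And>i j. i < j \<Longrightarrow> j < n \<Longrightarrow> 4 * cmod (G $$ (i,n+j)) < T"
  shows "4 * cmod (G $$ (r,c)) < T"
proof (cases "c < n")
  case True
  show ?thesis
  proof (cases "r < c")
    case True
    then show ?thesis using R2 \<open>c < n\<close> by blast
  next
    case False
    then have "4 * cmod (G $$ (c,r)) < T"
      using R2[of c r] r rc by simp
    then show ?thesis
      using skew_herm_hamiltonian_cmod_swap[OF G, of r c] r c by simp
  qed
next
  case False
  define d where "d = c - n"
  have cd: "c = n + d" "d < n" "d \<noteq> r"
    using False c rc unfolding d_def by auto
  show ?thesis
  proof (cases "r < d")
    case True
    then show ?thesis using R3[of r d] cd by simp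
  next
    case False
    then have "4 * cmod (G $$ (d, n+r)) < T"
      using R3[of d r] r cd by simp
    moreover have "cmod (G $$ (d, n+r)) = cmod (G $$ (r, n+d))"
      using skew_herm_hamiltonian_cmod_jpartner[OF G, of "n+r" d]
        skew_herm_hamiltonian_cmod_swap[OF G, of d "n+r"] r cd
      by (simp add: jpartner_def add.commute)
    ultimately show ?thesis
      using cd by simp
  qed
qed

lemma skew_herm_hamiltonian_offdiag_entry_bound:
  assumes G: "skew_herm_hamiltonian n G" and r: "r < 2*n" and c: "c < 2*n"
    and rc: "c \<noteq> r" "c \<noteq> jpartner n r"
    and R2: "\<And>i j. i < j \<Longrightarrow> j < n \<Longrightarrow> 4 * cmod (G $$ (i,j)) < T"
    and R3: "\<And>i j. i < j \<Longrightarrow> j < n \<Longrightarrow> 4 * cmod (G $$ (i,n+j)) < T"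
  shows "4 * cmod (G $$ (r,c)) < T"
proof (cases "r < n")
  case True
  then show ?thesis
    using skew_herm_hamiltonian_upper_offdiag_entry_bound[OF G True c _ _ R2 R3] rc
    by (simp add: jpartner_def add.commute)
next
  case False
  then have "4 * cmod (G $$ (jpartner n r, jpartner n c)) < T"
    using r c rc by (intro skew_herm_hamiltonian_upper_offdiag_entry_bound[OF G _ _ _ _ R2 R3])
      (auto simp: jpartner_def)
  then show ?thesis
    using skew_herm_hamiltonian_cmod_jpartner[OF G r c] by simp
qed

lemma skew_herm_hamiltonian_fro_norm_bound:
  assumes n: "n \<ge> 1" and G: "skew_herm_hamiltonian n G" and diag: "\<And>r. r < 2*n \<Longrightarrow> G $$ (r,r) = 0"
    and R1: "\<And>i. i < n \<Longrightarrow> 2 * cmod (G $$ (i,n+i)) < T"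
    and R2: "\<And>i j. i < j \<Longrightarrow> j < n \<Longrightarrow> 4 * cmod (G $$ (i,j)) < T"
    and R3: "\<And>i j. i < j \<Longrightarrow> j < n \<Longrightarrow> 4 * cmod (G $$ (i,n+j)) < T"
  shows "(fro_norm G)\<^sup>2 < real (n * (n + 1)) * T\<^sup>2 / 4"
proof -
  have "(fro_norm G)\<^sup>2 = (\<Sum>r<2*n. \<Sum>c<2*n. (cmod (G $$ (r,c)))\<^sup>2)"
    using skew_herm_hamiltonianD(1)[OF G] unfolding fro_norm_def by (simp add: sum_nonneg)
  also have "\<dots> < (\<Sum>r<2*n. real (2*n + 2) * (T/4)\<^sup>2)"
  proof (rule sum_strict_mono)
    fix r assume "r \<in> {..<2*n}"
    then have r: "r < 2*n" by simp
    show "(\<Sum>c<2*n. (cmod (G $$ (r,c)))\<^sup>2) < real (2*n + 2) * (T/4)\<^sup>2"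
      using r jpartner_neq[OF r] diag[OF r]
        skew_herm_hamiltonian_jpartner_entry_bound[OF G r R1]
        skew_herm_hamiltonian_offdiag_entry_bound[OF G r _ _ _ R2 R3]
      by (intro sum_power2_less_two_level_bound[where p = "jpartner n r"]) auto
  qed (use n in \<open>auto simp: lessThan_empty_iff\<close>)
  also have "\<dots> = real (n * (n + 1)) * T\<^sup>2 / 4"
    by (simp add: power_divide algebra_simps)
  finally show ?thesis .
qed

lemma eta_sq_bound:
  assumes "n \<ge> 1"
  shows "real (n * (n + 1)) * (eta n)\<^sup>2 \<le> 4"
proof -
  define D where "D = 4 * (real n)\<^sup>2 - 2 * real n"
  have "real n \<ge> 1"
    using assms by simp
  then have D: "D > 0" "real (n * (n + 1)) \<le> D"
    unfolding D_def by (simp_all add: power2_eq_square algebra_simps)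
  have eta_sq: "(eta n)\<^sup>2 = 4 / D"
    unfolding eta_def D_def[symmetric] using D(1) by (simp add: power_divide)
  have "real (n * (n + 1)) * (eta n)\<^sup>2 \<le> D * (eta n)\<^sup>2"
    using D(2) by (rule mult_right_mono) simp
  also have "D * (eta n)\<^sup>2 = 4"
    using eta_sq D(1) by simp
  finally show ?thesis .
qed

lemma exists_admissible_rot_dot_ge:
  assumes n: "n \<ge> 1" and G: "skew_herm_hamiltonian n G" and diag: "\<And>r. r < 2*n \<Longrightarrow> G $$ (r,r) = 0"
  shows "\<exists>t i j \<alpha>. admissible n t i j \<alpha> \<and> \<bar>rinner G (rot_dot n t i j \<alpha>)\<bar> \<ge> eta n * fro_norm G"
proof (rule ccontr)
  let ?T = "eta n * fro_norm G"
  assume "\<not> ?thesis"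
  then have small: "\<bar>rinner G (rot_dot n t i j \<alpha>)\<bar> < ?T" if "admissible n t i j \<alpha>" for t i j \<alpha>
    using that by force
  have bound_R1: "2 * cmod (G $$ (i,n+i)) < ?T" if "i < n" for i
    using small[of R1 "i+1" "n+(i+1)" 0] rinner_rot_dot_R1[OF G that] that by (simp add: admissible_def)
  have bound_R2: "4 * cmod (G $$ (i,j)) < ?T" if "i < j" "j < n" for i j
    using small[of R2 "i+1" "j+1" "Arg (G $$ (i,j))"] rinner_rot_dot_R2[OF G that] that
    by (simp add: admissible_def)
  have bound_R3: "4 * cmod (G $$ (i,n+j)) < ?T" if "i < j" "j < n" for i j
    using small[of R3 "i+1" "n+(j+1)" "Arg (G $$ (i,n+j))"] rinner_rot_dot_R3[OF G that] that
    by (simp add: admissible_def)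
  have "(fro_norm G)\<^sup>2 < real (n * (n + 1)) * ?T\<^sup>2 / 4"
    by (rule skew_herm_hamiltonian_fro_norm_bound[OF n G diag bound_R1 bound_R2 bound_R3])
  also have "\<dots> = real (n * (n + 1)) * (eta n)\<^sup>2 * (fro_norm G)\<^sup>2 / 4"
    by (simp add: power_mult_distrib)
  also have "\<dots> \<le> (fro_norm G)\<^sup>2"
    using mult_right_mono[OF eta_sq_bound[OF n] zero_le_power2[of "fro_norm G"]] by simp
  finally show False
    by simp
qed

theorem lemma4p3:
  fixes n :: nat and A Z :: "complex mat"
  assumes "n \<ge> 1"
    and "hamiltonian n A"
    and "unitary_symplectic n Z"
  shows "\<exists>t i j \<alpha>. admissible n t i j \<alpha> \<and>
           \<bar>rinner (grad_f n A Z) (Z * rot_dot n t i j \<alpha>)\<bar> \<ge> eta n * fro_norm (grad_f n A Z)"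
proof -
  have A: "A \<in> carrier_mat (2*n) (2*n)"
    using assms(2) unfolding hamiltonian_def by blast
  have Z: "Z \<in> carrier_mat (2*n) (2*n)" and U: "ctrans Z * Z = 1\<^sub>m (2*n)"
    using assms(3) unfolding unitary_symplectic_def unitary_def by auto
  define G where "G = skew_herm_ham_proj n (ctrans Z * egrad n A Z)"
  have grad: "grad_f n A Z = Z * G"
    unfolding G_def by (rule grad_f_eq[OF assms(3)])
  have G: "skew_herm_hamiltonian n G"
    unfolding G_def by (rule skew_herm_hamiltonian_skew_herm_ham_proj)
  have diag: "G $$ (r,r) = 0" if "r < 2*n" for r
    unfolding G_def using index_diag_skew_herm_ham_proj Im_diag_ctrans_mult_egrad[OF Z A] that by blast
  obtain t i j \<alpha> where adm: "admissible n t i j \<alpha>"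
    and ge: "\<bar>rinner G (rot_dot n t i j \<alpha>)\<bar> \<ge> eta n * fro_norm G"
    using exists_admissible_rot_dot_ge[OF assms(1) G diag] by blast
  have "rinner (Z * G) (Z * rot_dot n t i j \<alpha>) = rinner G (rot_dot n t i j \<alpha>)"
    and "fro_norm (Z * G) = fro_norm G"
    using rinner_mult_unitary[OF Z U] fro_norm_mult_unitary[OF Z U] skew_herm_hamiltonianD(1)[OF G] by simp_all
  with ge have "\<bar>rinner (Z * G) (Z * rot_dot n t i j \<alpha>)\<bar> \<ge> eta n * fro_norm (Z * G)"
    by simp
  with adm show ?thesis
    unfolding grad by blast
qed

end
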